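(* Let $\theta:H\to H$ be an endomorphism. Then the zero hyperideal $\{0\}$ is a $\theta$-maximal hyperideal of $H$ if and only if $\operatorname{Max}(H)=\{\operatorname{Ker}\theta\}$.
   Context: Throughout, $(H,h,k)$ is a commutative Krasner $(m,n)$-hyperring with scalar identity $1_H$: $(H,h)$ is a canonical $m$-ary hypergroup (a commutative associative $m$-ary hyperoperation $h:H^m\to\mathcal P^*(H)$ with a unique zero $0$ such that $h(u,0^{(m-1)})=\{u\}$, unique inverses, reversibility), $k:H^n\to H$ is a commutative associative $n$-ary operation distributing over $h$ in each argument, $k(0,u_2^n)=0$, and $k(u,1_H^{(n-1)})=u$ for all $u$. A hyperideal is a nonempty $I\subseteq H$ such that $(I,h)$ is an $m$-ary subhypergroup and $k(u_1^{i-1},I,u_{i+1}^n)\subseteq I$ for all $u_j\in H$. $\operatorname{Max}(H)$ is the set of maximal hyperideals (proper hyperideals $M$ such that $M\subseteq I$ for a hyperideal $I$ implies $I=M$ or $I=H$). An endomorphism is a map $\theta$ with $\theta(h(u_1^m))=h(\theta(u_1),\dots,\theta(u_m))$, $\theta(k(u_1^n))=k(\theta(u_1),\dots,\theta(u_n))$, $\theta(1_H)=1_H$; $\operatorname{Ker}\theta=\{u:\theta(u)=0\}$. A proper hyperideal $M$ is $\theta$-maximal if for every hyperideal $E$ with $M\subseteq E$, either $\theta(E)\subseteq M$ or $E=H$. *)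

theory Defs
  imports "HOL-Library.Multiset"
begin

text \<open>An m-ary hyperoperation is
  modelled as a function on lists (only lists of length m over H matter), an
  n-ary operation likewise.  Positions are 0-based.\<close>

definition lists_over :: "'a set \<Rightarrow> nat \<Rightarrow> 'a list set" where
  "lists_over A l = {xs. length xs = l \<and> set xs \<subseteq> A}"

text \<open>Extension of h to (h x_1^{i}, h(x_{i+1}^{i+m}), x_{i+m+1}^{2m-1}) on a list of length 2m-1.\<close>
definition hassoc_at :: "nat \<Rightarrow> ('a list \<Rightarrow> 'a set) \<Rightarrow> nat \<Rightarrow> 'a list \<Rightarrow> 'a set" where
  "hassoc_at m h i xs = (\<Union>z \<in> h (take m (drop i xs)). h (take i xs @ [z] @ drop (i + m) xs))"

definition m_ary_hypergroup :: "'a set \<Rightarrow> nat \<Rightarrow> ('a list \<Rightarrow> 'a set) \<Rightarrow> bool" where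
  "m_ary_hypergroup H m h \<longleftrightarrow>
     m \<ge> 2 \<and>
     (\<forall>xs \<in> lists_over H m. h xs \<noteq> {} \<and> h xs \<subseteq> H) \<and>
     (\<forall>xs \<in> lists_over H (2*m - 1). \<forall>i<m. \<forall>j<m. hassoc_at m h i xs = hassoc_at m h j xs) \<and>
     (\<forall>xs \<in> lists_over H m. \<forall>i<m. (\<Union>z\<in>H. h (xs[i := z])) = H)"

definition commutative_hyperop :: "'a set \<Rightarrow> nat \<Rightarrow> ('a list \<Rightarrow> 'a set) \<Rightarrow> bool" where
  "commutative_hyperop H m h \<longleftrightarrow>
     (\<forall>xs \<in> lists_over H m. \<forall>ys. mset ys = mset xs \<longrightarrow> h ys = h xs)"

definition hinv :: "'a set \<Rightarrow> nat \<Rightarrow> ('a list \<Rightarrow> 'a set) \<Rightarrow> 'a \<Rightarrow> 'a \<Rightarrow> 'a" where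
  "hinv H m h z x = (THE y. y \<in> H \<and> z \<in> h (x # y # replicate (m - 2) z))"

definition canonical_m_ary_hypergroup :: "'a set \<Rightarrow> nat \<Rightarrow> ('a list \<Rightarrow> 'a set) \<Rightarrow> 'a \<Rightarrow> bool" where
  "canonical_m_ary_hypergroup H m h z \<longleftrightarrow>
     m_ary_hypergroup H m h \<and> commutative_hyperop H m h \<and>
     z \<in> H \<and> (\<forall>x\<in>H. h (x # replicate (m - 1) z) = {x}) \<and>
     (\<forall>e\<in>H. (\<forall>x\<in>H. h (x # replicate (m - 1) e) = {x}) \<longrightarrow> e = z) \<and>
     (\<forall>x\<in>H. \<exists>!y. y \<in> H \<and> z \<in> h (x # y # replicate (m - 2) z)) \<and>
     (\<forall>xs \<in> lists_over H m. \<forall>x. x \<in> h xs \<longrightarrow>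
        (\<forall>i<m. xs ! i \<in> h ((map (hinv H m h z) xs)[i := x])))"

definition krasner_hyperring ::
  "'a set \<Rightarrow> nat \<Rightarrow> nat \<Rightarrow> ('a list \<Rightarrow> 'a set) \<Rightarrow> ('a list \<Rightarrow> 'a) \<Rightarrow> 'a \<Rightarrow> 'a \<Rightarrow> bool" where
  "krasner_hyperring H m n h k z one \<longleftrightarrow>
     canonical_m_ary_hypergroup H m h z \<and>
     n \<ge> 2 \<and>
     (\<forall>xs \<in> lists_over H n. k xs \<in> H) \<and>
     (\<forall>xs \<in> lists_over H (2*n - 1). \<forall>i<n. \<forall>j<n.
        k (take i xs @ [k (take n (drop i xs))] @ drop (i + n) xs) =
        k (take j xs @ [k (take n (drop j xs))] @ drop (j + n) xs)) \<and>
     (\<forall>xs \<in> lists_over H n. \<forall>ys. mset ys = mset xs \<longrightarrow> k ys = k xs) \<and>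
     (\<forall>as \<in> lists_over H (n - 1). \<forall>i<n. \<forall>xs \<in> lists_over H m.
        (\<lambda>a. k (take i as @ a # drop i as)) ` h xs = h (map (\<lambda>x. k (take i as @ x # drop i as)) xs)) \<and>
     (\<forall>as \<in> lists_over H (n - 1). \<forall>i<n. k (take i as @ z # drop i as) = z) \<and>
     one \<in> H \<and> (\<forall>x\<in>H. k (x # replicate (n - 1) one) = x)"

definition hyperideal ::
  "'a set \<Rightarrow> nat \<Rightarrow> nat \<Rightarrow> ('a list \<Rightarrow> 'a set) \<Rightarrow> ('a list \<Rightarrow> 'a) \<Rightarrow> 'a set \<Rightarrow> bool" where
  "hyperideal H m n h k I \<longleftrightarrow>
     I \<noteq> {} \<and> I \<subseteq> H \<and>
     \<comment> \<open>(I,h) is an m-ary subhypergroup: closed, and reproductive inside I\<close>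
     (\<forall>xs \<in> lists_over I m. h xs \<subseteq> I) \<and>
     (\<forall>xs \<in> lists_over I m. \<forall>i<m. (\<Union>u\<in>I. h (xs[i := u])) = I) \<and>
     (\<forall>as \<in> lists_over H (n - 1). \<forall>i<n. \<forall>u\<in>I. k (take i as @ u # drop i as) \<in> I)"

definition MaxH ::
  "'a set \<Rightarrow> nat \<Rightarrow> nat \<Rightarrow> ('a list \<Rightarrow> 'a set) \<Rightarrow> ('a list \<Rightarrow> 'a) \<Rightarrow> 'a set set" where
  "MaxH H m n h k = {M. hyperideal H m n h k M \<and> M \<noteq> H \<and>
       (\<forall>I. hyperideal H m n h k I \<and> M \<subseteq> I \<longrightarrow> I = M \<or> I = H)}"

definition endomorphism ::
  "'a set \<Rightarrow> nat \<Rightarrow> nat \<Rightarrow> ('a list \<Rightarrow> 'a set) \<Rightarrow> ('a list \<Rightarrow> 'a) \<Rightarrow> 'a \<Rightarrow> ('a \<Rightarrow> 'a) \<Rightarrow> bool" where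
  "endomorphism H m n h k one \<theta> \<longleftrightarrow>
     \<theta> ` H \<subseteq> H \<and>
     (\<forall>xs \<in> lists_over H m. \<theta> ` h xs = h (map \<theta> xs)) \<and>
     (\<forall>xs \<in> lists_over H n. \<theta> (k xs) = k (map \<theta> xs)) \<and>
     \<theta> one = one"

definition Ker :: "'a set \<Rightarrow> 'a \<Rightarrow> ('a \<Rightarrow> 'a) \<Rightarrow> 'a set" where
  "Ker H z \<theta> = {u \<in> H. \<theta> u = z}"

definition theta_maximal ::
  "'a set \<Rightarrow> nat \<Rightarrow> nat \<Rightarrow> ('a list \<Rightarrow> 'a set) \<Rightarrow> ('a list \<Rightarrow> 'a) \<Rightarrow> ('a \<Rightarrow> 'a) \<Rightarrow> 'a set \<Rightarrow> bool" where
  "theta_maximal H m n h k \<theta> M \<longleftrightarrow>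
     hyperideal H m n h k M \<and> M \<noteq> H \<and>
     (\<forall>E. hyperideal H m n h k E \<and> M \<subseteq> E \<longrightarrow> \<theta> ` E \<subseteq> M \<or> E = H)"

end

theory Submission
  imports Defs
begin

text \<open>Every proper hyperideal contains 0, so a proper {0} is \<theta>-maximal exactly when \<theta> maps
  every proper hyperideal into {0}.  In that case \<theta> 0 = 0, so Ker \<theta> is a hyperideal; it is proper
  because \<theta> 1 = 1 \<noteq> 0, hence it is the largest proper hyperideal and thus the unique maximal
  one.  Conversely, by Zorn's lemma every proper hyperideal lies in a maximal one, which must be
  Ker \<theta>.\<close>

lemma krasner_hyperringD:
  assumes "krasner_hyperring H m n h k z one"
  shows "2 \<le> m" and "2 \<le> n" and "z \<in> H" and "one \<in> H"
    and "\<And>xs. xs \<in> lists_over H m \<Longrightarrow> h xs \<subseteq> H"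
    and "\<And>xs i. xs \<in> lists_over H m \<Longrightarrow> i < m \<Longrightarrow> (\<Union>u\<in>H. h (xs[i := u])) = H"
    and "\<And>xs ys. xs \<in> lists_over H m \<Longrightarrow> mset ys = mset xs \<Longrightarrow> h ys = h xs"
    and "\<And>x. x \<in> H \<Longrightarrow> h (x # replicate (m - 1) z) = {x}"
    and "\<And>xs. xs \<in> lists_over H n \<Longrightarrow> k xs \<in> H"
    and "\<And>as i. as \<in> lists_over H (n - 1) \<Longrightarrow> i < n \<Longrightarrow> k (take i as @ z # drop i as) = z"
    and "\<And>x. x \<in> H \<Longrightarrow> k (x # replicate (n - 1) one) = x"
  using assms
  unfolding krasner_hyperring_def canonical_m_ary_hypergroup_def m_ary_hypergroup_def
    commutative_hyperop_def
  by (elim conjE; meson)+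

lemma endomorphismD:
  assumes "endomorphism H m n h k one \<theta>"
  shows "\<And>x. x \<in> H \<Longrightarrow> \<theta> x \<in> H"
    and "\<And>xs. xs \<in> lists_over H m \<Longrightarrow> \<theta> ` h xs = h (map \<theta> xs)"
    and "\<And>xs. xs \<in> lists_over H n \<Longrightarrow> \<theta> (k xs) = k (map \<theta> xs)"
    and "\<theta> one = one"
  using assms unfolding endomorphism_def by (elim conjE; blast)+

lemma hyperidealD:
  assumes "hyperideal H m n h k I"
  shows "I \<noteq> {}" and "I \<subseteq> H"
    and "\<And>xs. xs \<in> lists_over I m \<Longrightarrow> h xs \<subseteq> I"
    and "\<And>xs i. xs \<in> lists_over I m \<Longrightarrow> i < m \<Longrightarrow> (\<Union>u\<in>I. h (xs[i := u])) = I"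
    and "\<And>as i u. as \<in> lists_over H (n - 1) \<Longrightarrow> i < n \<Longrightarrow> u \<in> I \<Longrightarrow>
           k (take i as @ u # drop i as) \<in> I"
  using assms unfolding hyperideal_def by (elim conjE; meson)+

lemma lists_over_update:
  "xs \<in> lists_over A l \<Longrightarrow> u \<in> A \<Longrightarrow> xs[i := u] \<in> lists_over A l"
  by (auto simp: lists_over_def dest: subsetD[OF set_update_subset_insert])

lemma replicate_pred_eq_Cons:
  assumes "2 \<le> n"
  shows "replicate (n - 1) a = a # replicate (n - 2) a"
proof -
  have "n - 1 = Suc (n - 2)" using assms by arith
  then show ?thesis by simp
qed

lemma hyperideal_zero_mem:
  assumes K: "krasner_hyperring H m n h k z one" and I: "hyperideal H m n h k I"
  shows "z \<in> I"
proof -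
  note KD = krasner_hyperringD[OF K]
  obtain u where u: "u \<in> I" using hyperidealD(1)[OF I] by blast
  then have "u \<in> H" using hyperidealD(2)[OF I] by blast
  then have as: "u # replicate (n - 2) one \<in> lists_over H (n - 1)"
    and as': "z # replicate (n - 2) one \<in> lists_over H (n - 1)"
    using KD(2-4) by (auto simp: lists_over_def)
  have "k (u # z # replicate (n - 2) one) = z"
    using KD(10)[OF as, of 1] KD(2) by simp
  moreover have "k (u # z # replicate (n - 2) one) \<in> I"
    using hyperidealD(5)[OF I as', of 0 u] KD(2) u by simp
  ultimately show ?thesis by simp
qed

lemma hyperideal_eq_carrier_if_one_mem:
  assumes K: "krasner_hyperring H m n h k z one" and I: "hyperideal H m n h k I"
    and one: "one \<in> I"
  shows "I = H"
proof
  note KD = krasner_hyperringD[OF K]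
  show "I \<subseteq> H" by (rule hyperidealD(2)[OF I])
  show "H \<subseteq> I"
  proof
    fix x assume x: "x \<in> H"
    then have "x # replicate (n - 2) one \<in> lists_over H (n - 1)"
      using KD(2,4) by (auto simp: lists_over_def)
    from hyperidealD(5)[OF I this, of 1 one] have "k (x # one # replicate (n - 2) one) \<in> I"
      using KD(2) one by simp
    then show "x \<in> I" using KD(11)[OF x] replicate_pred_eq_Cons[OF KD(2), of one] by simp
  qed
qed

lemma one_neq_zero:
  assumes K: "krasner_hyperring H m n h k z one" and nontrivial: "H \<noteq> {z}"
  shows "one \<noteq> z"
proof
  note KD = krasner_hyperringD[OF K]
  assume one_eq: "one = z"
  have "x = z" if x: "x \<in> H" for x
  proof -
    have "x # replicate (n - 2) z \<in> lists_over H (n - 1)"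
      using x KD(2,3) by (auto simp: lists_over_def)
    from KD(10)[OF this, of 1] have "k (x # z # replicate (n - 2) z) = z"
      using KD(2) by simp
    then show "x = z" using KD(11)[OF x] one_eq replicate_pred_eq_Cons[OF KD(2), of z] by simp
  qed
  then show False using nontrivial KD(3) by blast
qed

lemma hyperop_zeros_update:
  assumes K: "krasner_hyperring H m n h k z one" and w: "w \<in> H" and i: "i < m"
  shows "h ((replicate m z)[i := w]) = {w}"
proof -
  note KD = krasner_hyperringD[OF K]
  have "mset ((replicate m z)[i := w]) = add_mset w (mset (replicate m z) - {#z#})"
    using i by (simp add: mset_update)
  also have "\<dots> = mset (w # replicate (m - 1) z)"
    using i by (cases m) auto
  finally have "h ((replicate m z)[i := w]) = h (w # replicate (m - 1) z)"
    using KD(1,3) w by (intro KD(7)) (auto simp: lists_over_def)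
  also have "\<dots> = {w}" using KD(8)[OF w] .
  finally show ?thesis .
qed

lemma map_Ker_eq_replicate:
  "xs \<in> lists_over (Ker H z \<theta>) l \<Longrightarrow> map \<theta> xs = replicate l z"
  by (rule replicate_eqI) (auto simp: lists_over_def Ker_def)

lemma Ker_hyperop_closed:
  assumes K: "krasner_hyperring H m n h k z one" and E: "endomorphism H m n h k one \<theta>"
    and xs: "xs \<in> lists_over (Ker H z \<theta>) m"
  shows "h xs \<subseteq> Ker H z \<theta>"
proof
  note KD = krasner_hyperringD[OF K]
  fix y assume y: "y \<in> h xs"
  have xsH: "xs \<in> lists_over H m" using xs by (auto simp: lists_over_def Ker_def)
  have "\<theta> ` h xs = h (replicate m z)"
    using endomorphismD(2)[OF E xsH] map_Ker_eq_replicate[OF xs] by simp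
  also have "\<dots> = {z}"
    using hyperop_zeros_update[OF K KD(3), of 0] list_update_id[of "replicate m z" 0] KD(1)
    by simp
  finally show "y \<in> Ker H z \<theta>" using y KD(5)[OF xsH] by (auto simp: Ker_def)
qed

lemma hyperideal_Ker:
  assumes K: "krasner_hyperring H m n h k z one" and E: "endomorphism H m n h k one \<theta>"
    and \<theta>_zero: "\<theta> z = z"
  shows "hyperideal H m n h k (Ker H z \<theta>)"
  unfolding hyperideal_def
proof (intro conjI ballI allI impI)
  show "Ker H z \<theta> \<noteq> {}" using krasner_hyperringD(3)[OF K] \<theta>_zero by (auto simp: Ker_def)
  show "Ker H z \<theta> \<subseteq> H" by (auto simp: Ker_def)
  show "h xs \<subseteq> Ker H z \<theta>" if "xs \<in> lists_over (Ker H z \<theta>) m" for xs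
    using Ker_hyperop_closed[OF K E that] .
next
  note KD = krasner_hyperringD[OF K] and ED = endomorphismD[OF E]
  fix xs i assume xs: "xs \<in> lists_over (Ker H z \<theta>) m" and i: "i < m"
  have xsH: "xs \<in> lists_over H m" using xs by (auto simp: lists_over_def Ker_def)
  show "(\<Union>u\<in>Ker H z \<theta>. h (xs[i := u])) = Ker H z \<theta>"
  proof
    show "(\<Union>u\<in>Ker H z \<theta>. h (xs[i := u])) \<subseteq> Ker H z \<theta>"
      using Ker_hyperop_closed[OF K E lists_over_update[OF xs]] by blast
    show "Ker H z \<theta> \<subseteq> (\<Union>u\<in>Ker H z \<theta>. h (xs[i := u]))"
    proof
      fix x assume x: "x \<in> Ker H z \<theta>"
      then obtain u where u: "u \<in> H" and xu: "x \<in> h (xs[i := u])"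
        using KD(6)[OF xsH i] by (auto simp: Ker_def)
      text \<open>Applying \<theta> turns every entry but the i-th into 0, which forces \<theta> u = \<theta> x = 0.\<close>
      have "\<theta> x \<in> h (map \<theta> (xs[i := u]))"
        using ED(2)[OF lists_over_update[OF xsH u]] xu by blast
      also have "map \<theta> (xs[i := u]) = (replicate m z)[i := \<theta> u]"
        by (simp add: map_update map_Ker_eq_replicate[OF xs])
      also have "h \<dots> = {\<theta> u}" using hyperop_zeros_update[OF K ED(1)[OF u] i] .
      finally have "u \<in> Ker H z \<theta>" using x u by (simp add: Ker_def)
      then show "x \<in> (\<Union>u\<in>Ker H z \<theta>. h (xs[i := u]))" using xu by blast
    qed
  qed
next
  note KD = krasner_hyperringD[OF K] and ED = endomorphismD[OF E]
  fix as i u assume as: "as \<in> lists_over H (n - 1)" and i: "i < n" and u: "u \<in> Ker H z \<theta>"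
  have L: "take i as @ u # drop i as \<in> lists_over H n" using as u KD(2)
    by (auto simp: lists_over_def Ker_def dest: in_set_takeD in_set_dropD)
  have \<theta>as: "map \<theta> as \<in> lists_over H (n - 1)" using as ED(1) by (auto simp: lists_over_def)
  have "\<theta> (k (take i as @ u # drop i as)) = k (take i (map \<theta> as) @ z # drop i (map \<theta> as))"
    using ED(3)[OF L] u by (simp add: Ker_def take_map drop_map)
  also have "\<dots> = z" by (rule KD(10)[OF \<theta>as i])
  finally show "k (take i as @ u # drop i as) \<in> Ker H z \<theta>"
    using KD(9)[OF L] by (simp add: Ker_def)
qed

lemma hyperideal_zero:
  assumes K: "krasner_hyperring H m n h k z one"
  shows "hyperideal H m n h k {z}"
proof -
  have "Ker H z id = {z}" using krasner_hyperringD(3)[OF K] by (auto simp: Ker_def)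
  moreover have "endomorphism H m n h k one id" by (simp add: endomorphism_def)
  ultimately show ?thesis using hyperideal_Ker[OF K] by fastforce
qed

lemma lists_over_Union_chain:
  assumes "subset.chain \<A> \<C>" and "\<C> \<noteq> {}" and "xs \<in> lists_over (\<Union>\<C>) l"
  obtains I where "I \<in> \<C>" and "xs \<in> lists_over I l"
  using finite_subset_Union_chain[of "set xs" \<C> \<A>] assms by (auto simp: lists_over_def)

lemma hyperideal_Union_chain:
  assumes ch: "subset.chain {I. hyperideal H m n h k I} \<C>" and ne: "\<C> \<noteq> {}"
  shows "hyperideal H m n h k (\<Union>\<C>)"
  unfolding hyperideal_def
proof (intro conjI ballI allI impI)
  have hI: "hyperideal H m n h k I" if "I \<in> \<C>" for I
    using ch that by (auto simp: subset_chain_def)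
  note ID = hyperidealD[OF hI]
  have closed: "h xs \<subseteq> \<Union>\<C>" if xs: "xs \<in> lists_over (\<Union>\<C>) m" for xs
  proof -
    obtain I where "I \<in> \<C>" and "xs \<in> lists_over I m"
      by (rule lists_over_Union_chain[OF ch ne xs])
    with ID(3) show ?thesis by blast
  qed
  show "\<Union>\<C> \<noteq> {}" using ne ID(1) by blast
  show "\<Union>\<C> \<subseteq> H" using ID(2) by blast
  show "h xs \<subseteq> \<Union>\<C>" if "xs \<in> lists_over (\<Union>\<C>) m" for xs using closed[OF that] .
  show "k (take i as @ u # drop i as) \<in> \<Union>\<C>"
    if as: "as \<in> lists_over H (n - 1)" and i: "i < n" and u: "u \<in> \<Union>\<C>" for as i u
  proof -
    from u obtain I where I: "I \<in> \<C>" and "u \<in> I" by blast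
    with ID(5)[OF I as i] show ?thesis by blast
  qed
  fix xs i assume xs: "xs \<in> lists_over (\<Union>\<C>) m" and i: "i < m"
  show "(\<Union>u\<in>\<Union>\<C>. h (xs[i := u])) = \<Union>\<C>"
  proof
    show "(\<Union>u\<in>\<Union>\<C>. h (xs[i := u])) \<subseteq> \<Union>\<C>"
      using closed[OF lists_over_update[OF xs]] by blast
    show "\<Union>\<C> \<subseteq> (\<Union>u\<in>\<Union>\<C>. h (xs[i := u]))"
    proof
      fix x assume "x \<in> \<Union>\<C>"
      then have "x # xs \<in> lists_over (\<Union>\<C>) (Suc m)" using xs by (auto simp: lists_over_def)
      then obtain I where I: "I \<in> \<C>" and "x # xs \<in> lists_over I (Suc m)"
        by (rule lists_over_Union_chain[OF ch ne])
      then have "x \<in> I" and "xs \<in> lists_over I m" by (auto simp: lists_over_def)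
      then have "x \<in> (\<Union>u\<in>I. h (xs[i := u]))" using ID(4)[OF I _ i] by blast
      with I show "x \<in> (\<Union>u\<in>\<Union>\<C>. h (xs[i := u]))" by blast
    qed
  qed
qed

lemma exists_MaxH_superset:
  assumes K: "krasner_hyperring H m n h k z one"
    and E: "hyperideal H m n h k E" and proper: "E \<noteq> H"
  obtains M where "M \<in> MaxH H m n h k" and "E \<subseteq> M"
proof -
  define \<A> where "\<A> = {I. hyperideal H m n h k I \<and> E \<subseteq> I \<and> one \<notin> I}"
  have "\<exists>M\<in>\<A>. \<forall>X\<in>\<A>. M \<subseteq> X \<longrightarrow> X = M"
  proof (rule subset_Zorn_nonempty)
    show "\<A> \<noteq> {}"
      using hyperideal_eq_carrier_if_one_mem[OF K E] E proper by (auto simp: \<A>_def)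
    fix \<C> assume ne: "\<C> \<noteq> {}" and ch: "subset.chain \<A> \<C>"
    then have "subset.chain {I. hyperideal H m n h k I} \<C>"
      by (auto simp: subset_chain_def \<A>_def)
    then have "hyperideal H m n h k (\<Union>\<C>)" using ne by (rule hyperideal_Union_chain)
    then show "\<Union>\<C> \<in> \<A>" using ne ch by (auto simp: subset_chain_def \<A>_def)
  qed
  then obtain M where M: "M \<in> \<A>" and M_max: "\<forall>X\<in>\<A>. M \<subseteq> X \<longrightarrow> X = M" by blast
  have "I = M \<or> I = H" if "hyperideal H m n h k I" "M \<subseteq> I" for I
    using M M_max that hyperideal_eq_carrier_if_one_mem[OF K that(1)] by (auto simp: \<A>_def)
  then have "M \<in> MaxH H m n h k"
    using M krasner_hyperringD(4)[OF K] by (auto simp: MaxH_def \<A>_def)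
  with M show ?thesis using that by (auto simp: \<A>_def)
qed

lemma MaxH_eq_Ker_if_theta_maximal_zero:
  assumes K: "krasner_hyperring H m n h k z one" and E: "endomorphism H m n h k one \<theta>"
    and T: "theta_maximal H m n h k \<theta> {z}"
  shows "MaxH H m n h k = {Ker H z \<theta>}"
proof -
  have zero: "hyperideal H m n h k {z}" and nontrivial: "H \<noteq> {z}"
    and T_max: "\<And>F. hyperideal H m n h k F \<Longrightarrow> z \<in> F \<Longrightarrow> \<theta> ` F \<subseteq> {z} \<or> F = H"
    using T unfolding theta_maximal_def by auto
  have "\<theta> z = z" using T_max[OF zero] nontrivial by blast
  then have Ker: "hyperideal H m n h k (Ker H z \<theta>)" by (rule hyperideal_Ker[OF K E])
  have "one \<notin> Ker H z \<theta>"
    using one_neq_zero[OF K nontrivial] endomorphismD(4)[OF E] by (simp add: Ker_def)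
  then have Ker_proper: "Ker H z \<theta> \<noteq> H" using krasner_hyperringD(4)[OF K] by blast
  have largest: "F \<subseteq> Ker H z \<theta>" if "hyperideal H m n h k F" "F \<noteq> H" for F
    using T_max[OF that(1) hyperideal_zero_mem[OF K that(1)]] that hyperidealD(2)[OF that(1)]
    by (auto simp: Ker_def)
  have "Ker H z \<theta> \<in> MaxH H m n h k"
    using Ker Ker_proper largest unfolding MaxH_def by blast
  moreover have "M = Ker H z \<theta>" if "M \<in> MaxH H m n h k" for M
    using that Ker Ker_proper largest unfolding MaxH_def by blast
  ultimately show ?thesis by blast
qed

lemma theta_maximal_zero_if_MaxH_eq_Ker:
  assumes K: "krasner_hyperring H m n h k z one"
    and Max: "MaxH H m n h k = {Ker H z \<theta>}"
  shows "theta_maximal H m n h k \<theta> {z}"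
proof -
  have Ker: "hyperideal H m n h k (Ker H z \<theta>)" and Ker_proper: "Ker H z \<theta> \<noteq> H"
    using Max by (auto simp: MaxH_def)
  have "{z} \<noteq> H"
    using hyperideal_zero_mem[OF K Ker] Ker_proper by (auto simp: Ker_def)
  moreover have "\<theta> ` F \<subseteq> {z}" if "hyperideal H m n h k F" "F \<noteq> H" for F
    using exists_MaxH_superset[OF K that] Max by (auto simp: Ker_def)
  ultimately show ?thesis
    using hyperideal_zero[OF K] by (auto simp: theta_maximal_def)
qed

theorem mainTheorem18:
  assumes "krasner_hyperring H m n h k z one"
    and "endomorphism H m n h k one \<theta>"
  shows "theta_maximal H m n h k \<theta> {z} \<longleftrightarrow> MaxH H m n h k = {Ker H z \<theta>}"
  using MaxH_eq_Ker_if_theta_maximal_zero[OF assms] theta_maximal_zero_if_MaxH_eq_Ker[OF assms(1)]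
  by blast

end
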